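(* Let $w$ be an infinite word with $\delta(w)<\gamma$, where $\gamma=(1+\sqrt5)/2$. Then $w$ is periodic.
   Context: Words are over an arbitrary alphabet; infinite words are right-infinite. The empty word counts as a palindromic prefix. If $w$ has infinitely many palindromic prefixes, let $(n_i)_{i\ge1}$ be the increasing sequence of their lengths ($n_1=0$) and $\delta(w)=\limsup n_{i+1}/n_i$; otherwise $\delta(w)=\infty$. *)

theory Defs
  imports Complex_Main "HOL-Library.Infinite_Set" "HOL-Library.Extended_Real" "HOL-Library.Liminf_Limsup"
begin

definition pal_prefix :: "(nat \<Rightarrow> 'a) \<Rightarrow> nat \<Rightarrow> bool" where
  "pal_prefix w n \<longleftrightarrow> (\<forall>i<n. w i = w (n - 1 - i))"

definition pal_lengths :: "(nat \<Rightarrow> 'a) \<Rightarrow> nat set" where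
  "pal_lengths w = {n. pal_prefix w n}"

text \<open>n_(i+1) = enumerate (pal_lengths w) i (0-based), so n_1 = 0.\<close>

definition delta :: "(nat \<Rightarrow> 'a) \<Rightarrow> ereal" where
  "delta w = (if infinite (pal_lengths w)
     then limsup (\<lambda>i. ereal (real (enumerate (pal_lengths w) (Suc i))
                               / real (enumerate (pal_lengths w) i)))
     else \<infinity>)"

definition periodic_word :: "(nat \<Rightarrow> 'a) \<Rightarrow> bool" where
  "periodic_word w \<longleftrightarrow> (\<exists>p>0. \<forall>i. w (i + p) = w i)"

end

theory Submission
  imports Defs
begin

text \<open>Let \<open>e 0 < e 1 < \<dots>\<close> be the lengths of the palindromic prefixes. A palindromic prefix
of length \<open>M\<close> inside one of length \<open>N\<close> gives the prefix of length \<open>N\<close> the period \<open>N - M\<close>.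
If \<open>e (i+2) \<le> e (i+1) + e i\<close>, the periods \<open>e (i+2) - e (i+1)\<close> and \<open>e (i+1) - e i\<close> sum
to at most \<open>e (i+1)\<close>, which lets the latter propagate from the prefix of length \<open>e (i+1)\<close> to
the whole prefix of length \<open>e (i+2)\<close>; reflecting this prefix
then produces a palindromic prefix of length \<open>e (i+2) - (e (i+1) - e i)\<close>, which by
consecutiveness must be \<open>e (i+1)\<close>. So the gaps \<open>e (i+1) - e i\<close> are eventually constant, and
prefixes of unbounded length share this gap as a period. The inequality
\<open>e (i+2) \<le> e (i+1) + e i\<close> holds eventually as soon as the ratios \<open>e (i+1) / e i\<close> stay
below some \<open>c < (1 + sqrt 5) / 2\<close>, because then \<open>c\<^sup>2 < c + 1\<close>.\<close>

abbreviation pal_len :: "(nat \<Rightarrow> 'a) \<Rightarrow> nat \<Rightarrow> nat" where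
  "pal_len w \<equiv> enumerate (pal_lengths w)"

definition prefix_period :: "(nat \<Rightarrow> 'a) \<Rightarrow> nat \<Rightarrow> nat \<Rightarrow> bool" where
  "prefix_period w n p \<longleftrightarrow> (\<forall>i. p \<le> i \<and> i < n \<longrightarrow> w i = w (i - p))"

lemma pal_prefixD: "pal_prefix w n \<Longrightarrow> i < n \<Longrightarrow> w i = w (n - 1 - i)"
  unfolding pal_prefix_def by blast

lemma prefix_periodD: "prefix_period w n p \<Longrightarrow> p \<le> i \<Longrightarrow> i < n \<Longrightarrow> w i = w (i - p)"
  unfolding prefix_period_def by blast

lemma prefix_period_if_pal_prefixes:
  assumes "pal_prefix w N" "pal_prefix w M" "M \<le> N"
  shows "prefix_period w N (N - M)"
  unfolding prefix_period_def
proof (intro allI impI)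
  fix i assume i: "N - M \<le> i \<and> i < N"
  have "w i = w (N - 1 - i)" using pal_prefixD[OF assms(1)] i by blast
  also have "\<dots> = w (M - 1 - (N - 1 - i))"
    by (rule pal_prefixD[OF assms(2)]) (use i assms(3) in linarith)
  also have "M - 1 - (N - 1 - i) = i - (N - M)" using i assms(3) by linarith
  finally show "w i = w (i - (N - M))" .
qed

lemma prefix_period_extend:
  assumes q: "prefix_period w N q" and p: "prefix_period w M p"
    and "p + q \<le> M" "M \<le> N" "0 < q"
  shows "prefix_period w N p"
proof -
  have "w i = w (i - p)" if "p \<le> i" "i < N" for i
    using that
  proof (induction i rule: less_induct)
    case (less i)
    show ?case
    proof (cases "i < M")
      case True
      then show ?thesis using prefix_periodD[OF p] less.prems by blast
    next
      case False
      have "w i = w (i - q)"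
        by (rule prefix_periodD[OF q]) (use less.prems False assms(3) in linarith)+
      also have "\<dots> = w (i - q - p)"
        by (rule less.IH) (use less.prems False assms(3,5) in linarith)+
      also have "i - q - p = i - p - q" by simp
      also have "w (i - p - q) = w (i - p)"
        by (rule prefix_periodD[OF q, THEN sym]) (use less.prems False assms(3) in linarith)+
      finally show ?thesis .
    qed
  qed
  then show ?thesis unfolding prefix_period_def by blast
qed

lemma pal_prefix_diff_period:
  assumes "pal_prefix w N" "prefix_period w N p" "p \<le> N"
  shows "pal_prefix w (N - p)"
  unfolding pal_prefix_def
proof (intro allI impI)
  fix i assume i: "i < N - p"
  have "w (N - p - 1 - i) = w (N - 1 - (N - p - 1 - i))"
    by (rule pal_prefixD[OF assms(1)]) (use i in linarith)
  also have "N - 1 - (N - p - 1 - i) = p + i" using i by linarith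
  also have "w (p + i) = w i" using prefix_periodD[OF assms(2), of "p + i"] i by simp
  finally show "w i = w (N - p - 1 - i)" by simp
qed

lemma consecutive_pal_prefix_gaps_eq:
  assumes pL: "pal_prefix w L" and pM: "pal_prefix w M" and pN: "pal_prefix w N"
    and "L < M" "M < N" "N \<le> M + L"
    and between: "\<And>n. L < n \<Longrightarrow> n < N \<Longrightarrow> pal_prefix w n \<Longrightarrow> n = M"
  shows "N - M = M - L"
proof -
  have "prefix_period w N (N - M)"
    using prefix_period_if_pal_prefixes[OF pN pM] \<open>M < N\<close> by simp
  moreover have "prefix_period w M (M - L)"
    using prefix_period_if_pal_prefixes[OF pM pL] \<open>L < M\<close> by simp
  ultimately have "prefix_period w N (M - L)"
    by (rule prefix_period_extend) (use assms(4-6) in auto)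
  then have "pal_prefix w (N - (M - L))"
    by (rule pal_prefix_diff_period[OF pN]) (use assms(4,5) in linarith)
  then have "N - (M - L) = M" using assms(4-6) by (intro between) auto
  then show ?thesis using assms(4,5) by linarith
qed

lemma not_in_between_enumerate:
  fixes S :: "nat set"
  assumes "infinite S" "enumerate S i < n" "n < enumerate S (Suc i)"
  shows "n \<notin> S"
proof
  assume "n \<in> S"
  then obtain k where "enumerate S k = n" using enumerate_Ex[OF assms(1)] by blast
  then show False using assms by auto
qed

lemma pal_prefix_pal_len: "infinite (pal_lengths w) \<Longrightarrow> pal_prefix w (pal_len w i)"
  using enumerate_in_set unfolding pal_lengths_def by blast

lemma pal_len_gaps_eq:
  assumes inf: "infinite (pal_lengths w)"
    and "pal_len w (Suc (Suc i)) \<le> pal_len w (Suc i) + pal_len w i"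
  shows "pal_len w (Suc (Suc i)) - pal_len w (Suc i) = pal_len w (Suc i) - pal_len w i"
proof (rule consecutive_pal_prefix_gaps_eq[OF pal_prefix_pal_len[OF inf] pal_prefix_pal_len[OF inf]
      pal_prefix_pal_len[OF inf]])
  fix n assume n: "pal_len w i < n" "n < pal_len w (Suc (Suc i))" "pal_prefix w n"
  then have "n \<in> pal_lengths w" unfolding pal_lengths_def by simp
  then show "n = pal_len w (Suc i)"
    using n not_in_between_enumerate[OF inf, of i n] not_in_between_enumerate[OF inf, of "Suc i" n]
    by fastforce
qed (use inf assms(2) in auto)

lemma periodic_wordI:
  assumes "0 < p" "\<And>N. \<exists>n\<ge>N. prefix_period w n p"
  shows "periodic_word w"
  unfolding periodic_word_def
proof (intro exI conjI allI)
  fix i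
  obtain n where "Suc (i + p) \<le> n" "prefix_period w n p" using assms(2) by blast
  then show "w (i + p) = w i" using prefix_periodD[of w n p "i + p"] by simp
qed (fact assms(1))

lemma periodic_if_pal_len_gaps_eventually_const:
  assumes inf: "infinite (pal_lengths w)"
    and "eventually (\<lambda>i. pal_len w (Suc (Suc i)) - pal_len w (Suc i) = pal_len w (Suc i) - pal_len w i)
      sequentially"
  shows "periodic_word w"
proof -
  obtain i0 where i0: "\<And>i. i \<ge> i0 \<Longrightarrow>
      pal_len w (Suc (Suc i)) - pal_len w (Suc i) = pal_len w (Suc i) - pal_len w i"
    using assms(2) unfolding eventually_sequentially by blast
  define p where "p = pal_len w (Suc i0) - pal_len w i0"
  have gap: "pal_len w (Suc (i0 + k)) - pal_len w (i0 + k) = p" for k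
    by (induction k) (use i0 in \<open>auto simp: p_def\<close>)
  show ?thesis
  proof (rule periodic_wordI)
    show "0 < p" unfolding p_def using inf by simp
    fix N
    have "prefix_period w (pal_len w (Suc (i0 + N))) p"
      using prefix_period_if_pal_prefixes[OF pal_prefix_pal_len[OF inf, of "Suc (i0 + N)"]
          pal_prefix_pal_len[OF inf, of "i0 + N"]] gap[of N] inf by simp
    moreover have "N \<le> pal_len w (Suc (i0 + N))" using le_enumerate[OF inf, of "Suc (i0 + N)"] by simp
    ultimately show "\<exists>n\<ge>N. prefix_period w n p" by blast
  qed
qed

lemma square_lt_succ_if_lt_golden_ratio:
  fixes c :: real
  assumes "1 < c" "c < (1 + sqrt 5) / 2"
  shows "c * c < c + 1"
proof -
  have "(2 * c - 1)\<^sup>2 < (sqrt 5)\<^sup>2"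
    using assms by (intro power_strict_mono) auto
  then show ?thesis by (simp add: power2_eq_square algebra_simps)
qed

lemma lt_sum_if_ratios_lt_golden_ratio:
  fixes a b d c :: real
  assumes "0 \<le> a" "a < b" "b < c * a" "d < c * b" "c < (1 + sqrt 5) / 2"
  shows "d < b + a"
proof -
  have "0 < a" using assms(1-3) by (cases "a = 0") auto
  moreover have "1 * a < c * a" using assms(2,3) by simp
  ultimately have "1 < c" by (simp only: mult_less_cancel_right_pos)
  have "d < b + (c - 1) * b" using assms(4) by (simp add: algebra_simps)
  also have "\<dots> \<le> b + (c - 1) * (c * a)"
    using \<open>1 < c\<close> assms(3) by (intro add_left_mono mult_left_mono) auto
  also have "(c - 1) * (c * a) = (c * c - c) * a" by (simp add: algebra_simps)
  also have "\<dots> \<le> a"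
    using square_lt_succ_if_lt_golden_ratio[OF \<open>1 < c\<close> assms(5)] \<open>0 < a\<close> by simp
  finally show ?thesis by simp
qed

lemma delta_lessD:
  assumes "delta w < ereal c"
  shows "infinite (pal_lengths w)"
    and "eventually (\<lambda>i. real (pal_len w (Suc i)) < c * real (pal_len w i)) sequentially"
proof -
  show inf: "infinite (pal_lengths w)"
    using assms unfolding delta_def by (cases "infinite (pal_lengths w)") auto
  have "eventually (\<lambda>i. ereal (real (pal_len w (Suc i)) / real (pal_len w i)) < ereal c) sequentially"
    by (rule Limsup_lessD) (use assms inf in \<open>simp add: delta_def\<close>)
  moreover have "eventually (\<lambda>i. 0 < pal_len w i) sequentially"
  proof (rule eventually_sequentiallyI)
    fix i :: nat assume "1 \<le> i"
    then show "0 < pal_len w i" using enumerate_mono[of 0 i, OF _ inf] by linarith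
  qed
  ultimately show "eventually (\<lambda>i. real (pal_len w (Suc i)) < c * real (pal_len w i)) sequentially"
    by eventually_elim (simp add: divide_less_eq)
qed

theorem corollary1p5:
  fixes w :: "nat \<Rightarrow> 'a"
  assumes "delta w < ereal ((1 + sqrt 5) / 2)"
  shows "periodic_word w"
proof -
  obtain x where x: "delta w < x" "x < ereal ((1 + sqrt 5) / 2)"
    using dense[OF assms] by blast
  then obtain c where "x = ereal c" by (cases x) auto
  with x have c: "delta w < ereal c" "c < (1 + sqrt 5) / 2" by auto
  note inf = delta_lessD(1)[OF c(1)] and ratio = delta_lessD(2)[OF c(1)]
  have "eventually (\<lambda>i. pal_len w (Suc (Suc i)) \<le> pal_len w (Suc i) + pal_len w i) sequentially"
    using ratio ratio[THEN eventually_sequentially_Suc[THEN iffD2]]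
  proof eventually_elim
    case (elim i)
    have "real (pal_len w (Suc (Suc i))) < real (pal_len w (Suc i)) + real (pal_len w i)"
      by (rule lt_sum_if_ratios_lt_golden_ratio) (use elim inf c(2) in auto)
    then show ?case by linarith
  qed
  then have "eventually (\<lambda>i. pal_len w (Suc (Suc i)) - pal_len w (Suc i)
      = pal_len w (Suc i) - pal_len w i) sequentially"
    by eventually_elim (rule pal_len_gaps_eq[OF inf])
  then show ?thesis using periodic_if_pal_len_gaps_eventually_const[OF inf] by blast
qed

end
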